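(* For a topological space $X$ let $F_X$ be the right $\Lambda$ $\mathsf{Com}$-module with $F_X(r)=X^{\times r}$ ($r\ge1$), $\Lambda$-operations $\mu_j(x_1,\dots,x_r)=(x_1,\dots,\widehat{x_j},\dots,x_r)$, and right $\mathsf{Com}$-action induced by diagonals (e.g. the binary product acting in the first slot sends $(x_1,\dots,x_r)\mapsto(x_1,x_1,x_2,\dots,x_r)$). Then $X\mapsto F_X$ is right adjoint to the functor $U:\Lambda\mathcal{M}od_{\mathsf{Com}}\to\mathrm{Top}$, $U(\mathcal{M})=\mathcal{M}(1)$: \[U:\Lambda\mathcal{M}od_{\mathsf{Com}}\rightleftarrows\mathrm{Top}:F.\] The same holds with simplicial sets in place of topological spaces.
   Context: $\mathsf{Com}$ is the operad with $\mathsf{Com}(r)$ a point for $r\ge1$ and no arity zero operation. A right $\Lambda$ $\mathsf{Com}$-module is a right $\mathsf{Com}$-module $\mathcal{M}$ with $\mathcal{M}(0)=\emptyset$ equipped with maps $\mu_j:\mathcal{M}(r)\to\mathcal{M}(r-1)$ ($r\ge2$, $1\le j\le r$) such that setting $\mathcal{M}_*(0)=*$, $\mathcal{M}_*(r)=\mathcal{M}(r)$ defines a right module over $\mathsf{Com}_*$ (which has $\mathsf{Com}_*(0)=*$), the $\mu_j$ being the action of the nullary operation in slot $j$. $\Lambda\mathcal{M}od_{\mathsf{Com}}$ is the category of such modules. *)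

theory Defs
  imports "HOL-Analysis.Analysis"
begin

text \<open>Arities are r \<ge> 1; slots are 0-indexed (slot i of arity r means i < r).
  A permutation of arity r is a function nat \<Rightarrow> nat that permutes {..<r}.
  The right symmetric action is written act r \<sigma> x (= x\<cdot>\<sigma>), so that
  act r \<sigma> (act r \<tau> x) = act r (\<tau> \<circ> \<sigma>) x.
  cmp r i s x  is  x \<circ>_i p_s  where p_s is the unique point of Com_*(s), s \<ge> 0;
  the case s = 0 is the operation mu_i of the Lambda-structure.  Operations landing in
  arity 0 (where M_*(0) = * ) are omitted, being trivial.\<close>

text \<open>delta i s: the map [r+s-1] \<rightarrow> [r] collapsing the block [i,i+s) onto i
  (for s = 0 the injection skipping i).\<close>
definition delta :: "nat \<Rightarrow> nat \<Rightarrow> nat \<Rightarrow> nat" where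
  "delta i s k = (if k < i then k else if k < i + s then i else k + 1 - s)"

text \<open>Block permutation \<sigma> \<circ>_i id_s in Sigma_(r+s-1).\<close>
definition blkperm :: "nat \<Rightarrow> (nat \<Rightarrow> nat) \<Rightarrow> nat \<Rightarrow> nat \<Rightarrow> nat \<Rightarrow> nat" where
  "blkperm r \<sigma> i s k =
     (if k < r + s - 1 then
        (let m = \<sigma> (delta i s k);
             st = (if m \<le> \<sigma> i then m else m + s - 1)
         in st + (if i \<le> k \<and> k < i + s then k - i else 0))
      else k)"

text \<open>Block permutation id_r \<circ>_i \<tau> in Sigma_(r+s-1), for \<tau> in Sigma_s.\<close>
definition idblk :: "nat \<Rightarrow> (nat \<Rightarrow> nat) \<Rightarrow> nat \<Rightarrow> nat \<Rightarrow> nat" where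
  "idblk i \<tau> s k = (if k < i then k else if k < i + s then i + \<tau> (k - i) else k)"

text \<open>Set-level right Lambda-Com-module (= right Com_*-module with M_*(0) = *, M(0) empty),
  on carriers C r, r \<ge> 1, via the partial composition axioms for the operad Com_*.\<close>
definition lcm_mod ::
  "(nat \<Rightarrow> 'm set) \<Rightarrow> (nat \<Rightarrow> (nat \<Rightarrow> nat) \<Rightarrow> 'm \<Rightarrow> 'm) \<Rightarrow> (nat \<Rightarrow> nat \<Rightarrow> nat \<Rightarrow> 'm \<Rightarrow> 'm) \<Rightarrow> bool" where
  "lcm_mod C act cmp \<longleftrightarrow>
     (\<forall>r \<sigma> x. 1 \<le> r \<and> \<sigma> permutes {..<r} \<and> x \<in> C r \<longrightarrow> act r \<sigma> x \<in> C r) \<and>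
     (\<forall>r i s x. i < r \<and> 2 \<le> r + s \<and> x \<in> C r \<longrightarrow> cmp r i s x \<in> C (r + s - 1)) \<and>
     (\<forall>r x. 1 \<le> r \<and> x \<in> C r \<longrightarrow> act r id x = x) \<and>
     (\<forall>r \<sigma> \<tau> x. 1 \<le> r \<and> \<sigma> permutes {..<r} \<and> \<tau> permutes {..<r} \<and> x \<in> C r \<longrightarrow>
         act r \<sigma> (act r \<tau> x) = act r (\<tau> \<circ> \<sigma>) x) \<and>
     (\<forall>r i x. i < r \<and> x \<in> C r \<longrightarrow> cmp r i 1 x = x) \<and>
     (\<forall>r i s j t x. i < r \<and> j < s \<and> 3 \<le> r + s + t \<and> x \<in> C r \<longrightarrow>
         cmp (r + s - 1) (i + j) t (cmp r i s x) = cmp r i (s + t - 1) x) \<and>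
     (\<forall>r i k s t x. i < k \<and> k < r \<and> 2 \<le> r + s \<and> 2 \<le> r + t \<and> 3 \<le> r + s + t \<and> x \<in> C r \<longrightarrow>
         cmp (r + s - 1) (k + s - 1) t (cmp r i s x) = cmp (r + t - 1) i s (cmp r k t x)) \<and>
     (\<forall>r \<sigma> i s x. \<sigma> permutes {..<r} \<and> i < r \<and> 2 \<le> r + s \<and> x \<in> C r \<longrightarrow>
         cmp r i s (act r \<sigma> x) = act (r + s - 1) (blkperm r \<sigma> i s) (cmp r (\<sigma> i) s x)) \<and>
     (\<forall>r i s \<tau> x. i < r \<and> 1 \<le> s \<and> \<tau> permutes {..<s} \<and> x \<in> C r \<longrightarrow>
         act (r + s - 1) (idblk i \<tau> s) (cmp r i s x) = cmp r i s x)"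

definition lcm_hom ::
  "(nat \<Rightarrow> 'm set) \<Rightarrow> (nat \<Rightarrow> (nat \<Rightarrow> nat) \<Rightarrow> 'm \<Rightarrow> 'm) \<Rightarrow> (nat \<Rightarrow> nat \<Rightarrow> nat \<Rightarrow> 'm \<Rightarrow> 'm) \<Rightarrow>
   (nat \<Rightarrow> 'n set) \<Rightarrow> (nat \<Rightarrow> (nat \<Rightarrow> nat) \<Rightarrow> 'n \<Rightarrow> 'n) \<Rightarrow> (nat \<Rightarrow> nat \<Rightarrow> nat \<Rightarrow> 'n \<Rightarrow> 'n) \<Rightarrow>
   (nat \<Rightarrow> 'm \<Rightarrow> 'n) \<Rightarrow> bool" where
  "lcm_hom C act cmp C' act' cmp' f \<longleftrightarrow>
     (\<forall>r x. 1 \<le> r \<and> x \<in> C r \<longrightarrow> f r x \<in> C' r) \<and>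
     (\<forall>r \<sigma> x. 1 \<le> r \<and> \<sigma> permutes {..<r} \<and> x \<in> C r \<longrightarrow> f r (act r \<sigma> x) = act' r \<sigma> (f r x)) \<and>
     (\<forall>r i s x. i < r \<and> 2 \<le> r + s \<and> x \<in> C r \<longrightarrow>
         f (r + s - 1) (cmp r i s x) = cmp' r i s (f r x))"

record 'm tmod =
  tsp :: "nat \<Rightarrow> 'm topology"
  tact :: "nat \<Rightarrow> (nat \<Rightarrow> nat) \<Rightarrow> 'm \<Rightarrow> 'm"
  tcomp :: "nat \<Rightarrow> nat \<Rightarrow> nat \<Rightarrow> 'm \<Rightarrow> 'm"

definition top_lmod :: "'m tmod \<Rightarrow> bool" where
  "top_lmod M \<longleftrightarrow> lcm_mod (\<lambda>r. topspace (tsp M r)) (tact M) (tcomp M) \<and>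
     (\<forall>r \<sigma>. 1 \<le> r \<and> \<sigma> permutes {..<r} \<longrightarrow> continuous_map (tsp M r) (tsp M r) (tact M r \<sigma>)) \<and>
     (\<forall>r i s. i < r \<and> 2 \<le> r + s \<longrightarrow> continuous_map (tsp M r) (tsp M (r + s - 1)) (tcomp M r i s))"

definition top_hom :: "'m tmod \<Rightarrow> 'n tmod \<Rightarrow> (nat \<Rightarrow> 'm \<Rightarrow> 'n) \<Rightarrow> bool" where
  "top_hom M N f \<longleftrightarrow>
     lcm_hom (\<lambda>r. topspace (tsp M r)) (tact M) (tcomp M) (\<lambda>r. topspace (tsp N r)) (tact N) (tcomp N) f \<and>
     (\<forall>r. 1 \<le> r \<longrightarrow> continuous_map (tsp M r) (tsp N r) (f r))"

definition FTop :: "'a topology \<Rightarrow> (nat \<Rightarrow> 'a) tmod" where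
  "FTop X = \<lparr> tsp = (\<lambda>r. product_topology (\<lambda>_. X) {..<r}),
              tact = (\<lambda>r \<sigma> x. restrict (x \<circ> \<sigma>) {..<r}),
              tcomp = (\<lambda>r i s x. restrict (x \<circ> delta i s) {..<r + s - 1}) \<rparr>"

record 'a sset =
  scar :: "nat \<Rightarrow> 'a set"
  sface :: "nat \<Rightarrow> nat \<Rightarrow> 'a \<Rightarrow> 'a"   (* sface n i : X_n \<rightarrow> X_(n-1), i \<le> n, n \<ge> 1 *)
  sdeg :: "nat \<Rightarrow> nat \<Rightarrow> 'a \<Rightarrow> 'a"    (* sdeg n i : X_n \<rightarrow> X_(n+1), i \<le> n *)

definition is_sset :: "'a sset \<Rightarrow> bool" where
  "is_sset X \<longleftrightarrow>
     (\<forall>n i x. 1 \<le> n \<and> i \<le> n \<and> x \<in> scar X n \<longrightarrow> sface X n i x \<in> scar X (n - 1)) \<and>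
     (\<forall>n i x. i \<le> n \<and> x \<in> scar X n \<longrightarrow> sdeg X n i x \<in> scar X (Suc n)) \<and>
     (\<forall>n i j x. 2 \<le> n \<and> i < j \<and> j \<le> n \<and> x \<in> scar X n \<longrightarrow>
        sface X (n - 1) i (sface X n j x) = sface X (n - 1) (j - 1) (sface X n i x)) \<and>
     (\<forall>n i j x. i < j \<and> j \<le> n \<and> x \<in> scar X n \<longrightarrow>
        sface X (Suc n) i (sdeg X n j x) = sdeg X (n - 1) (j - 1) (sface X n i x)) \<and>
     (\<forall>n j x. j \<le> n \<and> x \<in> scar X n \<longrightarrow>
        sface X (Suc n) j (sdeg X n j x) = x \<and> sface X (Suc n) (Suc j) (sdeg X n j x) = x) \<and>
     (\<forall>n i j x. Suc j < i \<and> i \<le> Suc n \<and> x \<in> scar X n \<longrightarrow>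
        sface X (Suc n) i (sdeg X n j x) = sdeg X (n - 1) j (sface X n (i - 1) x)) \<and>
     (\<forall>n i j x. i \<le> j \<and> j \<le> n \<and> x \<in> scar X n \<longrightarrow>
        sdeg X (Suc n) i (sdeg X n j x) = sdeg X (Suc n) (Suc j) (sdeg X n i x))"

definition ssmap :: "'a sset \<Rightarrow> 'b sset \<Rightarrow> (nat \<Rightarrow> 'a \<Rightarrow> 'b) \<Rightarrow> bool" where
  "ssmap X Y f \<longleftrightarrow>
     (\<forall>n x. x \<in> scar X n \<longrightarrow> f n x \<in> scar Y n) \<and>
     (\<forall>n i x. 1 \<le> n \<and> i \<le> n \<and> x \<in> scar X n \<longrightarrow> f (n - 1) (sface X n i x) = sface Y n i (f n x)) \<and>
     (\<forall>n i x. i \<le> n \<and> x \<in> scar X n \<longrightarrow> f (Suc n) (sdeg X n i x) = sdeg Y n i (f n x))"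

text \<open>Operations are indexed first by the simplicial level n.\<close>
record 'm smod =
  ssp :: "nat \<Rightarrow> 'm sset"
  sact :: "nat \<Rightarrow> nat \<Rightarrow> (nat \<Rightarrow> nat) \<Rightarrow> 'm \<Rightarrow> 'm"
  scomp :: "nat \<Rightarrow> nat \<Rightarrow> nat \<Rightarrow> nat \<Rightarrow> 'm \<Rightarrow> 'm"

definition sset_lmod :: "'m smod \<Rightarrow> bool" where
  "sset_lmod M \<longleftrightarrow>
     (\<forall>r. 1 \<le> r \<longrightarrow> is_sset (ssp M r)) \<and>
     (\<forall>n. lcm_mod (\<lambda>r. scar (ssp M r) n) (sact M n) (scomp M n)) \<and>
     (\<forall>r \<sigma>. 1 \<le> r \<and> \<sigma> permutes {..<r} \<longrightarrow> ssmap (ssp M r) (ssp M r) (\<lambda>n. sact M n r \<sigma>)) \<and>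
     (\<forall>r i s. i < r \<and> 2 \<le> r + s \<longrightarrow> ssmap (ssp M r) (ssp M (r + s - 1)) (\<lambda>n. scomp M n r i s))"

definition sset_hom :: "'m smod \<Rightarrow> 'n smod \<Rightarrow> (nat \<Rightarrow> nat \<Rightarrow> 'm \<Rightarrow> 'n) \<Rightarrow> bool" where
  "sset_hom M N f \<longleftrightarrow>
     (\<forall>n. lcm_hom (\<lambda>r. scar (ssp M r) n) (sact M n) (scomp M n)
                  (\<lambda>r. scar (ssp N r) n) (sact N n) (scomp N n) (f n)) \<and>
     (\<forall>r. 1 \<le> r \<longrightarrow> ssmap (ssp M r) (ssp N r) (\<lambda>n. f n r))"

definition FSet :: "'a sset \<Rightarrow> (nat \<Rightarrow> 'a) smod" where
  "FSet X = \<lparr> ssp = (\<lambda>r. \<lparr> scar = (\<lambda>n. PiE {..<r} (\<lambda>_. scar X n)),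
                           sface = (\<lambda>n i x. restrict (\<lambda>k. sface X n i (x k)) {..<r}),
                           sdeg = (\<lambda>n i x. restrict (\<lambda>k. sdeg X n i (x k)) {..<r}) \<rparr>),
              sact = (\<lambda>n r \<sigma> x. restrict (x \<circ> \<sigma>) {..<r}),
              scomp = (\<lambda>n r i s x. restrict (x \<circ> delta i s) {..<r + s - 1}) \<rparr>"

end

theory Submission
  imports Defs
begin

(* A morphism M \<rightarrow> F_X is determined by its arity one component: the nullary operations of F_X
   delete coordinates, so the k-th coordinate of \<phi>(m) is \<phi>(\<pi>_k m), where \<pi>_k : M(r) \<rightarrow> M(1)
   inserts the nullary operation into every slot except k.  Conversely, for g : M(1) \<rightarrow> X the
   map m \<mapsto> (g(\<pi>_0 m), ..., g(\<pi>_(r-1) m)) is a morphism, because \<pi>_k does not depend on the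
   order of the deletions (nullary operations in distinct slots commute), \<pi>_k(m\<cdot>\<sigma>) = \<pi>_\<sigma>(k)(m)
   and \<pi>_k(m \<circ>_i p_s) = \<pi>_\<delta>(k)(m).  Being a composite of structure maps, \<pi>_k is continuous,
   respectively simplicial, and so is the lift. *)

section \<open>Slot combinatorics\<close>

lemma delta_lt: "i < r \<Longrightarrow> k < r + s - 1 \<Longrightarrow> delta i s k < r"
  unfolding delta_def by (simp; arith)

lemma delta_delta_nested: "j < s \<Longrightarrow> delta i s (delta (i + j) t k) = delta i (s + t - 1) k"
  unfolding delta_def by (simp; arith)

lemma delta_delta_disjoint: "i < k \<Longrightarrow> delta i s (delta (k + s - 1) t m) = delta k t (delta i s m)"
  unfolding delta_def by (simp; arith)

lemma delta_1 [simp]: "delta i (Suc 0) = id"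
  by (simp add: delta_def fun_eq_iff)

lemma permutes_lessThan_lt: "\<sigma> permutes {..<r} \<Longrightarrow> k < r \<Longrightarrow> \<sigma> k < r"
  using permutes_in_image[of \<sigma> "{..<r}" k] by simp

lemma blkperm_lt_delta:
  assumes p: "\<sigma> permutes {..<r}" and i: "i < r" and k: "k < r + s - 1"
  shows "blkperm r \<sigma> i s k < r + s - 1 \<and> delta (\<sigma> i) s (blkperm r \<sigma> i s k) = \<sigma> (delta i s k)"
proof -
  define m where "m = \<sigma> (delta i s k)"
  have "delta i s k < r" using delta_lt i k by blast
  then have m_lt: "m < r" and \<sigma>i_lt: "\<sigma> i < r"
    using i p by (auto simp: m_def permutes_lessThan_lt)
  have "m = \<sigma> i \<longleftrightarrow> delta i s k = i"
    using permutes_inj[OF p] by (metis m_def injD)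
  also have "\<dots> \<longleftrightarrow> i \<le> k \<and> k < i + s"
    unfolding delta_def by (simp; arith)
  finally have m_eq: "m = \<sigma> i \<longleftrightarrow> i \<le> k \<and> k < i + s" .
  have b: "blkperm r \<sigma> i s k = (if m \<le> \<sigma> i then m else m + s - 1) + (if i \<le> k \<and> k < i + s then k - i else 0)"
    using k unfolding blkperm_def Let_def m_def by simp
  consider "i \<le> k \<and> k < i + s" | "m < \<sigma> i" | "\<sigma> i < m"
    using m_eq by fastforce
  then show ?thesis
    using b m_eq m_lt \<sigma>i_lt unfolding m_def delta_def by cases auto
qed

definition del_slot :: "nat \<Rightarrow> nat \<Rightarrow> nat" where
  "del_slot j k = (if k < j then k else k - 1)"

lemma del_slot_lt: "k < r \<Longrightarrow> j < r \<Longrightarrow> j \<noteq> k \<Longrightarrow> del_slot j k < r - 1"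
  unfolding del_slot_def by auto

lemma del_slot_delta [simp]: "del_slot j (delta j 0 k) = k"
  unfolding del_slot_def delta_def by simp

lemma delta_del_slot: "j \<noteq> k \<Longrightarrow> delta j 0 (del_slot j k) = k"
  unfolding del_slot_def delta_def by (simp; arith)

lemma blkperm_0_del_slot:
  assumes p: "\<sigma> permutes {..<r}" and j: "j < r" and k: "k < r" and jk: "j \<noteq> k"
  shows "blkperm r \<sigma> j 0 (del_slot j k) = del_slot (\<sigma> j) (\<sigma> k)"
proof -
  have "del_slot j k < r + 0 - 1" using del_slot_lt[OF k j jk] by simp
  from blkperm_lt_delta[OF p j this] have "delta (\<sigma> j) 0 (blkperm r \<sigma> j 0 (del_slot j k)) = \<sigma> k"
    using delta_del_slot[OF jk] by simp
  then show ?thesis using del_slot_delta by metis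
qed

lemma blkperm_0_permutes:
  assumes p: "\<sigma> permutes {..<r}" and j: "j < r"
  shows "blkperm r \<sigma> j 0 permutes {..<r - 1}"
proof (rule bij_imp_permutes)
  let ?b = "blkperm r \<sigma> j 0"
  have b: "?b a < r - 1 \<and> delta (\<sigma> j) 0 (?b a) = \<sigma> (delta j 0 a)" if "a < r - 1" for a
    using blkperm_lt_delta[OF p j, of a 0] that by simp
  have "inj_on ?b {..<r - 1}"
  proof (rule inj_onI)
    fix a a' assume "a \<in> {..<r - 1}" "a' \<in> {..<r - 1}" "?b a = ?b a'"
    then have "\<sigma> (delta j 0 a) = \<sigma> (delta j 0 a')" using b[of a] b[of a'] by auto
    then have "delta j 0 a = delta j 0 a'" using permutes_inj[OF p] by (metis injD)
    then show "a = a'" using del_slot_delta by metis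
  qed
  moreover have "?b ` {..<r - 1} \<subseteq> {..<r - 1}" using b by auto
  ultimately show "bij_betw ?b {..<r - 1} {..<r - 1}"
    unfolding bij_betw_def using endo_inj_surj by blast
  show "?b x = x" if "x \<notin> {..<r - 1}" for x
    using that unfolding blkperm_def by simp
qed

definition other_slot :: "nat \<Rightarrow> nat" where
  "other_slot k = (if k = 0 then 1 else 0)"

lemma other_slot_neq: "other_slot k \<noteq> k"
  by (simp add: other_slot_def)

lemma other_slot_lt: "k < r \<Longrightarrow> 2 \<le> r \<Longrightarrow> other_slot k < r"
  by (simp add: other_slot_def)

(* The projection M(r) \<rightarrow> M(1) onto slot k: the nullary operation is inserted into
   the other slots one at a time, always into slot 0 unless that is the one kept. *)
fun slot_proj :: "(nat \<Rightarrow> nat \<Rightarrow> nat \<Rightarrow> 'm \<Rightarrow> 'm) \<Rightarrow> nat \<Rightarrow> nat \<Rightarrow> 'm \<Rightarrow> 'm" where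
  "slot_proj cmp r k m =
     (if r \<le> 1 then m
      else slot_proj cmp (r - 1) (del_slot (other_slot k) k) (cmp r (other_slot k) 0 m))"

declare slot_proj.simps [simp del]

lemma slot_proj_base [simp]: "r \<le> 1 \<Longrightarrow> slot_proj cmp r k m = m"
  by (simp add: slot_proj.simps)

lemma slot_proj_step:
  "2 \<le> r \<Longrightarrow>
   slot_proj cmp r k m = slot_proj cmp (r - 1) (del_slot (other_slot k) k) (cmp r (other_slot k) 0 m)"
  by (simp add: slot_proj.simps)

section \<open>Right Lambda-Com-modules and their tuple modules\<close>

abbreviation tuples :: "'a set \<Rightarrow> nat \<Rightarrow> (nat \<Rightarrow> 'a) set" where
  "tuples A r \<equiv> PiE {..<r} (\<lambda>_. A)"

abbreviation tuple_act :: "nat \<Rightarrow> (nat \<Rightarrow> nat) \<Rightarrow> (nat \<Rightarrow> 'a) \<Rightarrow> nat \<Rightarrow> 'a" where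
  "tuple_act r \<sigma> x \<equiv> restrict (x \<circ> \<sigma>) {..<r}"

abbreviation tuple_cmp :: "nat \<Rightarrow> nat \<Rightarrow> nat \<Rightarrow> (nat \<Rightarrow> 'a) \<Rightarrow> nat \<Rightarrow> 'a" where
  "tuple_cmp r i s x \<equiv> restrict (x \<circ> delta i s) {..<r + s - 1}"

lemma lcm_mod_tuples: "lcm_mod (tuples A) tuple_act tuple_cmp"
  unfolding lcm_mod_def
proof (intro conjI allI impI; (elim conjE)?)
  fix r :: nat and \<sigma> and x :: "nat \<Rightarrow> 'a" assume "\<sigma> permutes {..<r}" "x \<in> tuples A r"
  then show "tuple_act r \<sigma> x \<in> tuples A r"
    using permutes_lessThan_lt by fastforce
next
  fix r i s :: nat and x :: "nat \<Rightarrow> 'a" assume "i < r" "x \<in> tuples A r"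
  then show "tuple_cmp r i s x \<in> tuples A (r + s - 1)"
    using delta_lt by auto
next
  fix r :: nat and x :: "nat \<Rightarrow> 'a" assume "x \<in> tuples A r"
  then show "tuple_act r id x = x" by auto
next
  fix r :: nat and \<sigma> \<tau> and x :: "nat \<Rightarrow> 'a" assume \<sigma>: "\<sigma> permutes {..<r}"
  then show "tuple_act r \<sigma> (tuple_act r \<tau> x) = tuple_act r (\<tau> \<circ> \<sigma>) x"
    using permutes_lessThan_lt[OF \<sigma>] by (intro ext) simp
next
  fix r i :: nat and x :: "nat \<Rightarrow> 'a" assume "x \<in> tuples A r"
  then show "tuple_cmp r i 1 x = x" by auto
next
  fix r i s j t :: nat and x :: "nat \<Rightarrow> 'a" assume "i < r" "j < s"
  then have ij: "i + j < r + s - 1" and arity: "r + (s + t - 1) - 1 = r + s - 1 + t - 1" by auto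
  show "tuple_cmp (r + s - 1) (i + j) t (tuple_cmp r i s x) = tuple_cmp r i (s + t - 1) x"
    unfolding arity using delta_delta_nested[OF \<open>j < s\<close>] delta_lt[OF ij] by (intro ext) simp
next
  fix r i k s t :: nat and x :: "nat \<Rightarrow> 'a" assume "i < k" "k < r"
  then have "k + s - 1 < r + s - 1" "i < r + t - 1" and arity: "r + t - 1 + s - 1 = r + s - 1 + t - 1"
    by auto
  then show "tuple_cmp (r + s - 1) (k + s - 1) t (tuple_cmp r i s x) =
      tuple_cmp (r + t - 1) i s (tuple_cmp r k t x)"
    unfolding arity using delta_delta_disjoint[OF \<open>i < k\<close>] delta_lt by (intro ext) simp
next
  fix r i s :: nat and \<sigma> and x :: "nat \<Rightarrow> 'a" assume "\<sigma> permutes {..<r}" "i < r"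
  then show "tuple_cmp r i s (tuple_act r \<sigma> x) =
      tuple_act (r + s - 1) (blkperm r \<sigma> i s) (tuple_cmp r (\<sigma> i) s x)"
    using blkperm_lt_delta delta_lt by (intro ext) auto
next
  fix r i s :: nat and \<tau> and x :: "nat \<Rightarrow> 'a" assume "i < r" and \<tau>: "\<tau> permutes {..<s}"
  have \<tau>_lt: "i \<le> k \<Longrightarrow> k < i + s \<Longrightarrow> \<tau> (k - i) < s" for k
    using permutes_lessThan_lt[OF \<tau>] by simp
  then have "delta i s (idblk i \<tau> s k) = delta i s k" for k
    unfolding idblk_def delta_def by (simp; fastforce)
  moreover have "idblk i \<tau> s k < r + s - 1" if "k < r + s - 1" for k
    using \<tau>_lt[of k] \<open>i < r\<close> that unfolding idblk_def by auto
  ultimately show "tuple_act (r + s - 1) (idblk i \<tau> s) (tuple_cmp r i s x) = tuple_cmp r i s x"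
    by (intro ext) auto
qed

locale lcm_module =
  fixes C :: "nat \<Rightarrow> 'm set" and act :: "nat \<Rightarrow> (nat \<Rightarrow> nat) \<Rightarrow> 'm \<Rightarrow> 'm"
    and cmp :: "nat \<Rightarrow> nat \<Rightarrow> nat \<Rightarrow> 'm \<Rightarrow> 'm"
  assumes lcm_mod: "lcm_mod C act cmp"
begin

lemma cmp_in: "i < r \<Longrightarrow> 2 \<le> r + s \<Longrightarrow> x \<in> C r \<Longrightarrow> cmp r i s x \<in> C (r + s - 1)"
  using lcm_mod unfolding lcm_mod_def by (elim conjE) blast

lemma cmp_0_in: "i < r \<Longrightarrow> 2 \<le> r \<Longrightarrow> x \<in> C r \<Longrightarrow> cmp r i 0 x \<in> C (r - 1)"
  using cmp_in[of i r 0 x] by simp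

lemma act_in: "1 \<le> r \<Longrightarrow> \<sigma> permutes {..<r} \<Longrightarrow> x \<in> C r \<Longrightarrow> act r \<sigma> x \<in> C r"
  using lcm_mod unfolding lcm_mod_def by (elim conjE) blast

lemma act_id: "1 \<le> r \<Longrightarrow> x \<in> C r \<Longrightarrow> act r id x = x"
  using lcm_mod unfolding lcm_mod_def by simp

lemma cmp_unit: "i < r \<Longrightarrow> x \<in> C r \<Longrightarrow> cmp r i 1 x = x"
  using lcm_mod unfolding lcm_mod_def by simp

lemma cmp_cmp_nested:
  "i < r \<Longrightarrow> j < s \<Longrightarrow> 3 \<le> r + s + t \<Longrightarrow> x \<in> C r \<Longrightarrow>
   cmp (r + s - 1) (i + j) t (cmp r i s x) = cmp r i (s + t - 1) x"
  using lcm_mod unfolding lcm_mod_def by simp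

lemma cmp_cmp_disjoint:
  "i < k \<Longrightarrow> k < r \<Longrightarrow> 2 \<le> r + s \<Longrightarrow> 2 \<le> r + t \<Longrightarrow> 3 \<le> r + s + t \<Longrightarrow> x \<in> C r \<Longrightarrow>
   cmp (r + s - 1) (k + s - 1) t (cmp r i s x) = cmp (r + t - 1) i s (cmp r k t x)"
  using lcm_mod unfolding lcm_mod_def by simp

lemma cmp_act:
  "\<sigma> permutes {..<r} \<Longrightarrow> i < r \<Longrightarrow> 2 \<le> r + s \<Longrightarrow> x \<in> C r \<Longrightarrow>
   cmp r i s (act r \<sigma> x) = act (r + s - 1) (blkperm r \<sigma> i s) (cmp r (\<sigma> i) s x)"
  using lcm_mod unfolding lcm_mod_def by simp

lemma slot_proj_in: "1 \<le> r \<Longrightarrow> k < r \<Longrightarrow> m \<in> C r \<Longrightarrow> slot_proj cmp r k m \<in> C 1"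
proof (induction r arbitrary: k m rule: less_induct)
  case (less r)
  show ?case
  proof (cases "r = 1")
    case True
    then show ?thesis using less by simp
  next
    case False
    then have r: "2 \<le> r" using less by simp
    then have "cmp r (other_slot k) 0 m \<in> C (r - 1)" "del_slot (other_slot k) k < r - 1"
      using cmp_0_in other_slot_lt del_slot_lt other_slot_neq less.prems by auto
    then show ?thesis unfolding slot_proj_step[OF r] using less.IH[of "r - 1"] r by simp
  qed
qed

(* For two different first slots this is the commutation of nullary operations in distinct slots. *)
lemma slot_proj_del:
  "2 \<le> r \<Longrightarrow> k < r \<Longrightarrow> j < r \<Longrightarrow> j \<noteq> k \<Longrightarrow> m \<in> C r \<Longrightarrow>
   slot_proj cmp r k m = slot_proj cmp (r - 1) (del_slot j k) (cmp r j 0 m)"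
proof (induction r arbitrary: k j m rule: less_induct)
  case (less r)
  define j0 where "j0 = other_slot k"
  have j0: "j0 < r" "j0 \<noteq> k" using other_slot_lt other_slot_neq less.prems j0_def by auto
  have step: "slot_proj cmp r k m = slot_proj cmp (r - 1) (del_slot j0 k) (cmp r j0 0 m)"
    using slot_proj_step[OF less(2)] j0_def by simp
  show ?case
  proof (cases "j = j0")
    case True
    then show ?thesis using step by simp
  next
    case False
    then have r: "r - 1 < r" "2 \<le> r - 1" using less.prems j0 by auto
    define m0 where "m0 = cmp r j0 0 m"
    define m1 where "m1 = cmp r j 0 m"
    have m: "m0 \<in> C (r - 1)" "m1 \<in> C (r - 1)"
      using cmp_0_in j0 less.prems unfolding m0_def m1_def by auto
    have "del_slot j0 k < r - 1" "del_slot j0 j < r - 1" "del_slot j0 j \<noteq> del_slot j0 k"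
      using del_slot_lt j0 less.prems False unfolding del_slot_def by auto
    note IH0 = less.IH[OF r this m(1)]
    have "del_slot j k < r - 1" "del_slot j j0 < r - 1" "del_slot j j0 \<noteq> del_slot j k"
      using del_slot_lt j0 less.prems False unfolding del_slot_def by auto
    note IH1 = less.IH[OF r this m(2)]
    have "cmp (r - 1) (del_slot j0 j) 0 m0 = cmp (r - 1) (del_slot j j0) 0 m1"
      using cmp_cmp_disjoint[of j0 j r 0 0 m] cmp_cmp_disjoint[of j j0 r 0 0 m] False j0 less.prems r
      unfolding del_slot_def m0_def m1_def by (cases "j0 < j") auto
    moreover have "del_slot (del_slot j0 j) (del_slot j0 k) = del_slot (del_slot j j0) (del_slot j k)"
      using False j0 less.prems unfolding del_slot_def by auto
    ultimately show ?thesis using step IH0 IH1 unfolding m0_def m1_def by simp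
  qed
qed

lemma slot_proj_cmp:
  "i < r \<Longrightarrow> 2 \<le> r + s \<Longrightarrow> m \<in> C r \<Longrightarrow> k < r + s - 1 \<Longrightarrow>
   slot_proj cmp (r + s - 1) k (cmp r i s m) = slot_proj cmp r (delta i s k) m"
proof (induction s arbitrary: k rule: less_induct)
  case (less s)
  consider "s = 0" | "s = 1" | "2 \<le> s" by arith
  then show ?case
  proof cases
    case 1
    have "delta i 0 k < r" "delta i 0 k \<noteq> i"
      using delta_lt[of i r k 0] less.prems 1 by (auto simp: delta_def)
    then show ?thesis
      using slot_proj_del[of r "delta i 0 k" i m] less.prems 1 by simp
  next
    case 2
    then show ?thesis using cmp_unit less.prems by simp
  next
    case 3
    (* Deleting a slot j \<noteq> k of the inserted block shrinks the block by one. *)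
    define j where "j = (if k = i then i + 1 else i)"
    define n where "n = r + s - 1"
    have j: "j < n" "j \<noteq> k" "2 \<le> n" "i \<le> j" "j < i + s"
      using 3 less.prems unfolding j_def n_def by auto
    have "slot_proj cmp n k (cmp r i s m) = slot_proj cmp (n - 1) (del_slot j k) (cmp n j 0 (cmp r i s m))"
      using slot_proj_del[OF j(3) _ j(1,2)] cmp_in less.prems 3 unfolding n_def by simp
    also have "cmp n j 0 (cmp r i s m) = cmp r i (s - 1) m"
      using cmp_cmp_nested[of i r "j - i" s 0 m] less.prems j unfolding n_def by simp
    also have "slot_proj cmp (n - 1) (del_slot j k) (cmp r i (s - 1) m) =
        slot_proj cmp r (delta i (s - 1) (del_slot j k)) m"
      using less.IH[of "s - 1" "del_slot j k"] del_slot_lt[of k n j] j 3 less.prems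
      unfolding n_def by simp
    also have "delta i (s - 1) (del_slot j k) = delta i s k"
      using j 3 unfolding j_def del_slot_def delta_def by (simp; arith)
    finally show ?thesis unfolding n_def .
  qed
qed

lemma slot_proj_act:
  "1 \<le> r \<Longrightarrow> \<sigma> permutes {..<r} \<Longrightarrow> k < r \<Longrightarrow> m \<in> C r \<Longrightarrow>
   slot_proj cmp r k (act r \<sigma> m) = slot_proj cmp r (\<sigma> k) m"
proof (induction r arbitrary: \<sigma> k m rule: less_induct)
  case (less r)
  show ?case
  proof (cases "r = 1")
    case True
    then have "\<sigma> = id" using less.prems by (simp add: lessThan_Suc)
    then show ?thesis using act_id less.prems by (metis id_apply)
  next
    case False
    then have r: "2 \<le> r" using less.prems by simp
    define j where "j = other_slot k"
    define b where "b = blkperm r \<sigma> j 0"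
    have j: "j < r" "j \<noteq> k" using other_slot_lt other_slot_neq r less.prems j_def by auto
    have \<sigma>: "\<sigma> j < r" "\<sigma> k < r" "\<sigma> j \<noteq> \<sigma> k"
      using permutes_lessThan_lt[OF less.prems(2)] permutes_inj[OF less.prems(2)] j less.prems
      by (auto dest: injD)
    have "slot_proj cmp r k (act r \<sigma> m) = slot_proj cmp (r - 1) (del_slot j k) (cmp r j 0 (act r \<sigma> m))"
      using slot_proj_del[OF r less.prems(3) j] act_in less.prems by simp
    also have "cmp r j 0 (act r \<sigma> m) = act (r - 1) b (cmp r (\<sigma> j) 0 m)"
      using cmp_act[OF less.prems(2) j(1), of 0 m] r less.prems b_def by simp
    also have "slot_proj cmp (r - 1) (del_slot j k) (act (r - 1) b (cmp r (\<sigma> j) 0 m)) =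
        slot_proj cmp (r - 1) (b (del_slot j k)) (cmp r (\<sigma> j) 0 m)"
      using less.IH[of "r - 1" b "del_slot j k"] blkperm_0_permutes[OF less.prems(2) j(1)]
        del_slot_lt[of k r j] cmp_0_in \<sigma> j r less.prems b_def by simp
    also have "b (del_slot j k) = del_slot (\<sigma> j) (\<sigma> k)"
      using blkperm_0_del_slot[OF less.prems(2) j(1) less.prems(3) j(2)] b_def by simp
    also have "slot_proj cmp (r - 1) (del_slot (\<sigma> j) (\<sigma> k)) (cmp r (\<sigma> j) 0 m) = slot_proj cmp r (\<sigma> k) m"
      using slot_proj_del[OF r \<sigma>(2,1,3) less.prems(4)] by simp
    finally show ?thesis .
  qed
qed

end

definition tuple_lift :: "(nat \<Rightarrow> nat \<Rightarrow> nat \<Rightarrow> 'm \<Rightarrow> 'm) \<Rightarrow> ('m \<Rightarrow> 'a) \<Rightarrow> nat \<Rightarrow> 'm \<Rightarrow> nat \<Rightarrow> 'a" where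
  "tuple_lift cmp g r m = restrict (\<lambda>k. g (slot_proj cmp r k m)) {..<r}"

lemma tuple_lift_1 [simp]: "tuple_lift cmp g (Suc 0) m 0 = g m"
  by (simp add: tuple_lift_def)

lemma lcm_hom_in: "lcm_hom C act cmp C' act' cmp' f \<Longrightarrow> 1 \<le> r \<Longrightarrow> x \<in> C r \<Longrightarrow> f r x \<in> C' r"
  unfolding lcm_hom_def by blast

lemma lcm_hom_cmp:
  "lcm_hom C act cmp C' act' cmp' f \<Longrightarrow> i < r \<Longrightarrow> 2 \<le> r + s \<Longrightarrow> x \<in> C r \<Longrightarrow>
   f (r + s - 1) (cmp r i s x) = cmp' r i s (f r x)"
  unfolding lcm_hom_def by blast

context lcm_module
begin

lemma lcm_hom_tuple_lift:
  assumes g: "\<And>m. m \<in> C 1 \<Longrightarrow> g m \<in> A"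
  shows "lcm_hom C act cmp (tuples A) tuple_act tuple_cmp (tuple_lift cmp g)"
  unfolding lcm_hom_def tuple_lift_def
proof (intro conjI allI impI; (elim conjE)?)
  fix r m assume "1 \<le> r" "m \<in> C r"
  then show "restrict (\<lambda>k. g (slot_proj cmp r k m)) {..<r} \<in> tuples A r"
    using slot_proj_in g by auto
next
  fix r \<sigma> m assume "1 \<le> r" and \<sigma>: "\<sigma> permutes {..<r}" and "m \<in> C r"
  then show "restrict (\<lambda>k. g (slot_proj cmp r k (act r \<sigma> m))) {..<r} =
      tuple_act r \<sigma> (restrict (\<lambda>k. g (slot_proj cmp r k m)) {..<r})"
    using slot_proj_act permutes_lessThan_lt[OF \<sigma>] by (intro ext) simp
next
  fix r i s m assume "i < r" "2 \<le> r + s" "m \<in> C r"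
  then show "restrict (\<lambda>k. g (slot_proj cmp (r + s - 1) k (cmp r i s m))) {..<r + s - 1} =
      tuple_cmp r i s (restrict (\<lambda>k. g (slot_proj cmp r k m)) {..<r})"
    using slot_proj_cmp delta_lt by (intro ext) simp
qed

(* The nullary operations of the tuple module delete coordinates. *)
lemma hom_tuples_slot_proj:
  assumes h: "lcm_hom C act cmp (tuples A) tuple_act tuple_cmp \<psi>"
  shows "1 \<le> r \<Longrightarrow> m \<in> C r \<Longrightarrow> k < r \<Longrightarrow> \<psi> r m k = \<psi> 1 (slot_proj cmp r k m) 0"
proof (induction r arbitrary: k m rule: less_induct)
  case (less r)
  show ?case
  proof (cases "r = 1")
    case True
    then show ?thesis using less.prems by simp
  next
    case False
    then have r: "2 \<le> r" using less.prems by simp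
    define j where "j = other_slot k"
    have j: "j < r" "j \<noteq> k" using other_slot_lt other_slot_neq r less.prems j_def by auto
    have "\<psi> (r - 1) (cmp r j 0 m) = tuple_cmp r j 0 (\<psi> r m)"
      using lcm_hom_cmp[OF h j(1), of 0 m] r less.prems by simp
    then have "\<psi> r m k = \<psi> (r - 1) (cmp r j 0 m) (del_slot j k)"
      using del_slot_lt[of k r j] delta_del_slot[OF j(2)] j less.prems by simp
    also have "\<dots> = \<psi> 1 (slot_proj cmp (r - 1) (del_slot j k) (cmp r j 0 m)) 0"
      using less.IH[of "r - 1"] r del_slot_lt[of k r j] cmp_0_in j less.prems by simp
    finally show ?thesis unfolding slot_proj_step[OF r] j_def .
  qed
qed

lemma hom_tuples_eq_tuple_lift:
  assumes h: "lcm_hom C act cmp (tuples A) tuple_act tuple_cmp \<psi>"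
    and g: "\<And>m. m \<in> C 1 \<Longrightarrow> \<psi> 1 m 0 = g m"
    and m: "1 \<le> r" "m \<in> C r"
  shows "\<psi> r m = tuple_lift cmp g r m"
proof
  fix k
  have "\<psi> r m \<in> tuples A r" using lcm_hom_in[OF h m] .
  then show "\<psi> r m k = tuple_lift cmp g r m k"
    using hom_tuples_slot_proj[OF h m] g slot_proj_in[OF m(1) _ m(2)]
    unfolding tuple_lift_def by (cases "k < r") auto
qed

end

section \<open>Topological spaces\<close>

lemma top_lmod_lcm_module: "top_lmod M \<Longrightarrow> lcm_module (\<lambda>r. topspace (tsp M r)) (tact M) (tcomp M)"
  unfolding top_lmod_def lcm_module_def by blast

lemma continuous_map_slot_proj:
  assumes M: "top_lmod M"
  shows "1 \<le> r \<Longrightarrow> k < r \<Longrightarrow> continuous_map (tsp M r) (tsp M 1) (slot_proj (tcomp M) r k)"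
proof (induction r arbitrary: k rule: less_induct)
  case (less r)
  show ?case
  proof (cases "r = 1")
    case True
    then show ?thesis by (simp add: continuous_map_id[unfolded id_def])
  next
    case False
    then have r: "2 \<le> r" using less.prems by simp
    define j where "j = other_slot k"
    have j: "j < r" "j \<noteq> k" using other_slot_lt other_slot_neq r less.prems j_def by auto
    have "continuous_map (tsp M r) (tsp M (r - 1)) (tcomp M r j 0)"
      using M j r unfolding top_lmod_def by (metis add_0_right)
    moreover have "continuous_map (tsp M (r - 1)) (tsp M 1) (slot_proj (tcomp M) (r - 1) (del_slot j k))"
      using less.IH[of "r - 1"] r del_slot_lt[of k r j] j less.prems by simp
    ultimately have "continuous_map (tsp M r) (tsp M 1)
        (slot_proj (tcomp M) (r - 1) (del_slot j k) \<circ> tcomp M r j 0)"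
      by (rule continuous_map_compose)
    moreover have "slot_proj (tcomp M) r k = slot_proj (tcomp M) (r - 1) (del_slot j k) \<circ> tcomp M r j 0"
      unfolding j_def by (intro ext) (simp only: o_apply slot_proj_step[OF r])
    ultimately show ?thesis by (simp only:)
  qed
qed

lemma continuous_map_reindex:
  assumes "\<And>k. k < r \<Longrightarrow> f k < q"
  shows "continuous_map (product_topology (\<lambda>_. X) {..<q}) (product_topology (\<lambda>_. X) {..<r})
           (\<lambda>x. restrict (x \<circ> f) {..<r})"
  unfolding continuous_map_componentwise
  using assms continuous_map_product_projection[of "f _" "{..<q}" "\<lambda>_. X"] by auto

lemma top_lmod_FTop: "top_lmod (FTop X)"
  unfolding top_lmod_def FTop_def
  using lcm_mod_tuples[of "topspace X"] permutes_lessThan_lt delta_lt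
  by (auto intro!: continuous_map_reindex)

lemma top_hom_tuple_lift:
  assumes M: "top_lmod M" and g: "continuous_map (tsp M 1) X g"
  shows "top_hom M (FTop X) (tuple_lift (tcomp M) g)"
  unfolding top_hom_def
proof (intro conjI allI impI)
  show "lcm_hom (\<lambda>r. topspace (tsp M r)) (tact M) (tcomp M)
      (\<lambda>r. topspace (tsp (FTop X) r)) (tact (FTop X)) (tcomp (FTop X)) (tuple_lift (tcomp M) g)"
    using lcm_module.lcm_hom_tuple_lift[OF top_lmod_lcm_module[OF M], of g "topspace X"] g
    unfolding FTop_def by (simp add: continuous_map_def Pi_iff)
next
  fix r :: nat assume r: "1 \<le> r"
  have "continuous_map (tsp M r) X (g \<circ> slot_proj (tcomp M) r k)" if "k < r" for k
    using continuous_map_compose[OF continuous_map_slot_proj[OF M r that] g] .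
  then show "continuous_map (tsp M r) (tsp (FTop X) r) (tuple_lift (tcomp M) g r)"
    unfolding tuple_lift_def by (auto simp: FTop_def continuous_map_componentwise o_def)
qed

lemma top_hom_FTop_eq_tuple_lift:
  assumes M: "top_lmod M" and \<psi>: "top_hom M (FTop X) \<psi>"
    and g: "\<forall>m \<in> topspace (tsp M 1). \<psi> 1 m 0 = g m"
    and m: "1 \<le> r" "m \<in> topspace (tsp M r)"
  shows "\<psi> r m = tuple_lift (tcomp M) g r m"
  using lcm_module.hom_tuples_eq_tuple_lift[OF top_lmod_lcm_module[OF M] _ _ m, of "topspace X" \<psi> g]
    \<psi> g unfolding top_hom_def FTop_def by simp

section \<open>Simplicial sets\<close>

lemma slot_proj_natural:
  assumes h: "\<And>r j m. 2 \<le> r \<Longrightarrow> j < r \<Longrightarrow> m \<in> C r \<Longrightarrow> h (r - 1) (c r j 0 m) = c' r j 0 (h r m)"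
    and c: "\<And>r j m. 2 \<le> r \<Longrightarrow> j < r \<Longrightarrow> m \<in> C r \<Longrightarrow> c r j 0 m \<in> C (r - 1)"
  shows "1 \<le> r \<Longrightarrow> k < r \<Longrightarrow> m \<in> C r \<Longrightarrow> h 1 (slot_proj c r k m) = slot_proj c' r k (h r m)"
proof (induction r arbitrary: k m rule: less_induct)
  case (less r)
  show ?case
  proof (cases "r = 1")
    case True
    then show ?thesis by simp
  next
    case False
    then have r: "2 \<le> r" using less.prems by simp
    define j where "j = other_slot k"
    have j: "j < r" "j \<noteq> k" using other_slot_lt other_slot_neq r less.prems j_def by auto
    have "h 1 (slot_proj c (r - 1) (del_slot j k) (c r j 0 m)) =
        slot_proj c' (r - 1) (del_slot j k) (h (r - 1) (c r j 0 m))"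
      using less.IH[of "r - 1"] r del_slot_lt[of k r j] c j less.prems by simp
    then show ?thesis
      unfolding slot_proj_step[OF r] j_def[symmetric] using h[OF r j(1) less.prems(3)] by simp
  qed
qed

lemma ssmapD:
  assumes "ssmap X Y f"
  shows ssmap_in: "x \<in> scar X n \<Longrightarrow> f n x \<in> scar Y n"
    and ssmap_face: "1 \<le> n \<Longrightarrow> i \<le> n \<Longrightarrow> x \<in> scar X n \<Longrightarrow> f (n - 1) (sface X n i x) = sface Y n i (f n x)"
    and ssmap_deg: "i \<le> n \<Longrightarrow> x \<in> scar X n \<Longrightarrow> f (Suc n) (sdeg X n i x) = sdeg Y n i (f n x)"
  using assms unfolding ssmap_def by blast+

lemma is_ssetD:
  assumes "is_sset X"
  shows sface_in: "1 \<le> n \<Longrightarrow> i \<le> n \<Longrightarrow> x \<in> scar X n \<Longrightarrow> sface X n i x \<in> scar X (n - 1)"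
    and sdeg_in: "i \<le> n \<Longrightarrow> x \<in> scar X n \<Longrightarrow> sdeg X n i x \<in> scar X (Suc n)"
    and sface_sface: "2 \<le> n \<Longrightarrow> i < j \<Longrightarrow> j \<le> n \<Longrightarrow> x \<in> scar X n \<Longrightarrow>
      sface X (n - 1) i (sface X n j x) = sface X (n - 1) (j - 1) (sface X n i x)"
    and sface_sdeg_less: "i < j \<Longrightarrow> j \<le> n \<Longrightarrow> x \<in> scar X n \<Longrightarrow>
      sface X (Suc n) i (sdeg X n j x) = sdeg X (n - 1) (j - 1) (sface X n i x)"
    and sface_sdeg_same: "j \<le> n \<Longrightarrow> x \<in> scar X n \<Longrightarrow> sface X (Suc n) j (sdeg X n j x) = x"
    and sface_Suc_sdeg: "j \<le> n \<Longrightarrow> x \<in> scar X n \<Longrightarrow> sface X (Suc n) (Suc j) (sdeg X n j x) = x"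
    and sface_sdeg_greater: "Suc j < i \<Longrightarrow> i \<le> Suc n \<Longrightarrow> x \<in> scar X n \<Longrightarrow>
      sface X (Suc n) i (sdeg X n j x) = sdeg X (n - 1) j (sface X n (i - 1) x)"
    and sdeg_sdeg: "i \<le> j \<Longrightarrow> j \<le> n \<Longrightarrow> x \<in> scar X n \<Longrightarrow>
      sdeg X (Suc n) i (sdeg X n j x) = sdeg X (Suc n) (Suc j) (sdeg X n i x)"
  using assms unfolding is_sset_def by simp_all

lemma is_sset_FSet_arity:
  assumes X: "is_sset X"
  shows "is_sset (ssp (FSet X) r)"
  unfolding is_sset_def
  by (intro conjI allI impI; auto simp: FSet_def PiE_iff extensional_def fun_eq_iff is_ssetD[OF X, simplified])

lemma ssmap_FSet_reindex:
  assumes "\<And>k. k < q \<Longrightarrow> f k < r"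
  shows "ssmap (ssp (FSet X) r) (ssp (FSet X) q) (\<lambda>n x. restrict (x \<circ> f) {..<q})"
  using assms unfolding ssmap_def FSet_def by (auto simp: PiE_iff fun_eq_iff)

lemma sset_lmod_FSet: "is_sset X \<Longrightarrow> sset_lmod (FSet X)"
  unfolding sset_lmod_def
  using is_sset_FSet_arity lcm_mod_tuples permutes_lessThan_lt delta_lt
  by (auto simp: FSet_def intro!: ssmap_FSet_reindex[unfolded FSet_def, simplified])

lemma sset_lmod_lcm_module:
  "sset_lmod M \<Longrightarrow> lcm_module (\<lambda>r. scar (ssp M r) n) (sact M n) (scomp M n)"
  unfolding sset_lmod_def lcm_module_def by blast

lemma sset_lmod_ssmap_cmp_0:
  assumes "sset_lmod M" "j < r" "2 \<le> r"
  shows "ssmap (ssp M r) (ssp M (r - 1)) (\<lambda>n. scomp M n r j 0)"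
proof -
  have "2 \<le> r + 0" using assms(3) by simp
  then have "ssmap (ssp M r) (ssp M (r + 0 - 1)) (\<lambda>n. scomp M n r j 0)"
    using assms(1,2) unfolding sset_lmod_def by blast
  then show ?thesis by simp
qed

lemma ssmap_tuple_lift:
  assumes M: "sset_lmod M" and g: "ssmap (ssp M 1) X g" and r: "1 \<le> r"
  shows "ssmap (ssp M r) (ssp (FSet X) r) (\<lambda>n. tuple_lift (scomp M n) (g n) r)"
proof -
  note cmp_0_in = lcm_module.cmp_0_in[OF sset_lmod_lcm_module[OF M]]
  have face: "slot_proj (scomp M (n - 1)) r k (sface (ssp M r) n i x) =
      sface (ssp M 1) n i (slot_proj (scomp M n) r k x)"
    if "1 \<le> n" "i \<le> n" "k < r" "x \<in> scar (ssp M r) n" for n i k x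
    by (rule slot_proj_natural[where C = "\<lambda>r. scar (ssp M r) n", symmetric])
      (use ssmap_face[OF sset_lmod_ssmap_cmp_0[OF M]] cmp_0_in r that in auto)
  have deg: "slot_proj (scomp M (Suc n)) r k (sdeg (ssp M r) n i x) =
      sdeg (ssp M 1) n i (slot_proj (scomp M n) r k x)"
    if "i \<le> n" "k < r" "x \<in> scar (ssp M r) n" for n i k x
    by (rule slot_proj_natural[where C = "\<lambda>r. scar (ssp M r) n", symmetric])
      (use ssmap_deg[OF sset_lmod_ssmap_cmp_0[OF M]] cmp_0_in r that in auto)
  have proj_in: "slot_proj (scomp M n) r k x \<in> scar (ssp M 1) n"
    if "k < r" "x \<in> scar (ssp M r) n" for n k x
    using lcm_module.slot_proj_in[OF sset_lmod_lcm_module[OF M] r that] .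
  show ?thesis
    unfolding ssmap_def
  proof (intro conjI allI impI; (elim conjE)?)
    fix n x assume "x \<in> scar (ssp M r) n"
    then show "tuple_lift (scomp M n) (g n) r x \<in> scar (ssp (FSet X) r) n"
      using proj_in ssmap_in[OF g] by (auto simp: tuple_lift_def FSet_def)
  next
    fix n i x assume n: "1 \<le> n" "i \<le> n" and x: "x \<in> scar (ssp M r) n"
    have "g (n - 1) (slot_proj (scomp M (n - 1)) r k (sface (ssp M r) n i x)) =
        sface X n i (g n (slot_proj (scomp M n) r k x))" if "k < r" for k
      using face[OF n that x] ssmap_face[OF g n proj_in[OF that x]] by simp
    then show "tuple_lift (scomp M (n - 1)) (g (n - 1)) r (sface (ssp M r) n i x) =
        sface (ssp (FSet X) r) n i (tuple_lift (scomp M n) (g n) r x)"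
      unfolding tuple_lift_def FSet_def by (intro ext) simp
  next
    fix n i x assume n: "i \<le> n" and x: "x \<in> scar (ssp M r) n"
    have "g (Suc n) (slot_proj (scomp M (Suc n)) r k (sdeg (ssp M r) n i x)) =
        sdeg X n i (g n (slot_proj (scomp M n) r k x))" if "k < r" for k
      using deg[OF n that x] ssmap_deg[OF g n proj_in[OF that x]] by simp
    then show "tuple_lift (scomp M (Suc n)) (g (Suc n)) r (sdeg (ssp M r) n i x) =
        sdeg (ssp (FSet X) r) n i (tuple_lift (scomp M n) (g n) r x)"
      unfolding tuple_lift_def FSet_def by (intro ext) simp
  qed
qed

lemma FSet_simps:
  "scar (ssp (FSet X) r) n = tuples (scar X n) r" "sact (FSet X) n = tuple_act" "scomp (FSet X) n = tuple_cmp"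
  by (simp_all add: FSet_def)

lemma sset_hom_tuple_lift:
  assumes M: "sset_lmod M" and g: "ssmap (ssp M 1) X g"
  shows "sset_hom M (FSet X) (\<lambda>n. tuple_lift (scomp M n) (g n))"
proof -
  have "lcm_hom (\<lambda>r. scar (ssp M r) n) (sact M n) (scomp M n) (tuples (scar X n)) tuple_act tuple_cmp
      (tuple_lift (scomp M n) (g n))" for n
    by (rule lcm_module.lcm_hom_tuple_lift[OF sset_lmod_lcm_module[OF M]]) (rule ssmap_in[OF g])
  then show ?thesis
    unfolding sset_hom_def FSet_simps using ssmap_tuple_lift[OF M g] by blast
qed

lemma sset_hom_FSet_eq_tuple_lift:
  assumes M: "sset_lmod M" and \<psi>: "sset_hom M (FSet X) \<psi>"
    and g: "\<forall>n m. m \<in> scar (ssp M 1) n \<longrightarrow> \<psi> n 1 m 0 = g n m"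
    and m: "1 \<le> r" "m \<in> scar (ssp M r) n"
  shows "\<psi> n r m = tuple_lift (scomp M n) (g n) r m"
proof -
  have "lcm_hom (\<lambda>r. scar (ssp M r) n) (sact M n) (scomp M n) (tuples (scar X n)) tuple_act tuple_cmp (\<psi> n)"
    using \<psi> unfolding sset_hom_def FSet_simps by blast
  moreover have "\<And>m. m \<in> scar (ssp M 1) n \<Longrightarrow> \<psi> n 1 m 0 = g n m"
    using g by blast
  ultimately show ?thesis
    using lcm_module.hom_tuples_eq_tuple_lift[OF sset_lmod_lcm_module[OF M] _ _ m] by blast
qed

lemma FTop_universal:
  assumes M: "top_lmod M" and g: "continuous_map (tsp M 1) X g"
  shows "\<exists>\<phi>. top_hom M (FTop X) \<phi> \<and> (\<forall>m \<in> topspace (tsp M 1). \<phi> 1 m 0 = g m) \<and>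
           (\<forall>\<psi>. top_hom M (FTop X) \<psi> \<and> (\<forall>m \<in> topspace (tsp M 1). \<psi> 1 m 0 = g m) \<longrightarrow>
              (\<forall>r m. 1 \<le> r \<and> m \<in> topspace (tsp M r) \<longrightarrow> \<psi> r m = \<phi> r m))"
  using top_hom_tuple_lift[OF M g] top_hom_FTop_eq_tuple_lift[OF M]
  by (intro exI[of _ "tuple_lift (tcomp M) g"]) auto

lemma FSet_universal:
  assumes M: "sset_lmod M" and g: "ssmap (ssp M 1) X g"
  shows "\<exists>\<phi>. sset_hom M (FSet X) \<phi> \<and> (\<forall>n m. m \<in> scar (ssp M 1) n \<longrightarrow> \<phi> n 1 m 0 = g n m) \<and>
           (\<forall>\<psi>. sset_hom M (FSet X) \<psi> \<and> (\<forall>n m. m \<in> scar (ssp M 1) n \<longrightarrow> \<psi> n 1 m 0 = g n m) \<longrightarrow>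
              (\<forall>n r m. 1 \<le> r \<and> m \<in> scar (ssp M r) n \<longrightarrow> \<psi> n r m = \<phi> n r m))"
  using sset_hom_tuple_lift[OF M g] sset_hom_FSet_eq_tuple_lift[OF M]
  by (intro exI[of _ "\<lambda>n. tuple_lift (scomp M n) (g n)"]) auto

theorem lemma4p1:
  shows "(\<forall>(M :: 'm tmod) (X :: 'a topology).
            top_lmod M \<longrightarrow>
              top_lmod (FTop X) \<and>
              (\<forall>g. continuous_map (tsp M 1) X g \<longrightarrow>
                 (\<exists>\<phi>. top_hom M (FTop X) \<phi> \<and>
                      (\<forall>m \<in> topspace (tsp M 1). \<phi> 1 m 0 = g m) \<and>
                      (\<forall>\<psi>. top_hom M (FTop X) \<psi> \<and> (\<forall>m \<in> topspace (tsp M 1). \<psi> 1 m 0 = g m) \<longrightarrow>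
                           (\<forall>r m. 1 \<le> r \<and> m \<in> topspace (tsp M r) \<longrightarrow> \<psi> r m = \<phi> r m)))))
       \<and>
         (\<forall>(M :: 'n smod) (X :: 'b sset).
            sset_lmod M \<and> is_sset X \<longrightarrow>
              sset_lmod (FSet X) \<and>
              (\<forall>g. ssmap (ssp M 1) X g \<longrightarrow>
                 (\<exists>\<phi>. sset_hom M (FSet X) \<phi> \<and>
                      (\<forall>n m. m \<in> scar (ssp M 1) n \<longrightarrow> \<phi> n 1 m 0 = g n m) \<and>
                      (\<forall>\<psi>. sset_hom M (FSet X) \<psi> \<and> (\<forall>n m. m \<in> scar (ssp M 1) n \<longrightarrow> \<psi> n 1 m 0 = g n m) \<longrightarrow>
                           (\<forall>n r m. 1 \<le> r \<and> m \<in> scar (ssp M r) n \<longrightarrow> \<psi> n r m = \<phi> n r m)))))"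
  by (intro conjI allI impI top_lmod_FTop FTop_universal sset_lmod_FSet FSet_universal;
      (elim conjE)?; assumption)

end
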